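(* Let $(x_t)_{t=1}^T$ and $(a_t)_{t=1}^T$ be sequences with $x_t,a_t>0$ for all $t$. Then for any $\alpha\in[0,1]$, $$\sum_{t=1}^T\frac{x_t^{1-\alpha}a_t}{\sqrt{1+\sum_{s=1}^tx_s^{1-2\alpha}}}\le2\sqrt{\Big(\sum_{t=1}^Tx_ta_t^2\Big)\log\Big(1+\sum_{t=1}^Tx_t^{1-2\alpha}\Big)}.$$ *)

theory Defs
  imports Complex_Main
begin

end

theory Submission
  imports Defs "HOL-Analysis.Analysis"
begin

text \<open>With \<open>y t = x t powr (1 - 2\<alpha>)\<close> and \<open>S t = y 1 + \<dots> + y t\<close>, the t-th summand
  factors as \<open>(sqrt (x t) * a t) * sqrt (y t / (1 + S t))\<close>. Cauchy-Schwarz bounds the sum by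
  \<open>sqrt ((\<Sum> x t * a t\<^sup>2) * (\<Sum> y t / (1 + S t)))\<close>, and the second factor telescopes:
  \<open>y t / (1 + S t) \<le> ln (1 + S t) - ln (1 + S (t - 1))\<close> because \<open>1 - 1/u \<le> ln u\<close>.\<close>

lemma diff_div_le_ln_diff:
  fixes p q :: real
  assumes "0 < p" "p \<le> q"
  shows "(q - p) / q \<le> ln q - ln p"
proof -
  have "ln (p / q) \<le> p / q - 1"
    using assms by (intro ln_le_minus_one) simp
  with assms show ?thesis
    by (simp add: ln_div diff_divide_distrib)
qed

lemma sum_div_partial_sums_le_ln:
  fixes y :: "nat \<Rightarrow> real"
  assumes "\<And>t. 1 \<le> t \<Longrightarrow> t \<le> T \<Longrightarrow> 0 \<le> y t"
  shows "(\<Sum>t=1..T. y t / (1 + (\<Sum>s=1..t. y s))) \<le> ln (1 + (\<Sum>t=1..T. y t))"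
  using assms
proof (induction T)
  case 0
  then show ?case by simp
next
  case (Suc T)
  define S where "S = (\<Sum>s=1..T. y s)"
  have "0 \<le> S"
    unfolding S_def using Suc.prems by (intro sum_nonneg) auto
  moreover have "0 \<le> y (Suc T)"
    using Suc.prems by simp
  ultimately have step: "y (Suc T) / (1 + S + y (Suc T)) \<le> ln (1 + S + y (Suc T)) - ln (1 + S)"
    using diff_div_le_ln_diff[of "1 + S" "1 + S + y (Suc T)"] by simp
  have "(\<Sum>t=1..T. y t / (1 + (\<Sum>s=1..t. y s))) \<le> ln (1 + S)"
    unfolding S_def using Suc by simp
  with step show ?case
    by (simp add: S_def add.assoc)
qed

lemma sum_mult_le_sqrt_sum_squares:
  fixes b c :: "'a \<Rightarrow> real"
  shows "(\<Sum>i\<in>I. b i * c i) \<le> sqrt ((\<Sum>i\<in>I. (b i)\<^sup>2) * (\<Sum>i\<in>I. (c i)\<^sup>2))"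
proof -
  have "(\<Sum>i\<in>I. b i * c i) \<le> sqrt ((\<Sum>i\<in>I. b i * c i)\<^sup>2)"
    by simp
  also have "\<dots> \<le> sqrt ((\<Sum>i\<in>I. (b i)\<^sup>2) * (\<Sum>i\<in>I. (c i)\<^sup>2))"
    by (intro real_sqrt_le_mono Cauchy_Schwarz_ineq_sum)
  finally show ?thesis .
qed

lemma powr_one_minus_eq_sqrt_mult_sqrt:
  fixes u \<alpha> :: real
  assumes "0 < u"
  shows "u powr (1 - \<alpha>) = sqrt u * sqrt (u powr (1 - 2 * \<alpha>))"
proof -
  have "sqrt u * sqrt (u powr (1 - 2 * \<alpha>)) = u powr (1/2 + (1 - 2 * \<alpha>) / 2)"
    using assms by (simp add: powr_half_sqrt [symmetric] powr_powr powr_add)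
  also have "1/2 + (1 - 2 * \<alpha>) / 2 = 1 - \<alpha>"
    by (simp add: field_simps)
  finally show ?thesis ..
qed

theorem lemma28:
  fixes x a :: "nat \<Rightarrow> real" and T :: nat and \<alpha> :: real
  assumes "\<And>t. 1 \<le> t \<Longrightarrow> t \<le> T \<Longrightarrow> x t > 0"
      and "\<And>t. 1 \<le> t \<Longrightarrow> t \<le> T \<Longrightarrow> a t > 0"
      and "0 \<le> \<alpha>" and "\<alpha> \<le> 1"
  shows "(\<Sum>t=1..T. x t powr (1 - \<alpha>) * a t / sqrt (1 + (\<Sum>s=1..t. x s powr (1 - 2*\<alpha>))))
         \<le> 2 * sqrt ((\<Sum>t=1..T. x t * (a t)^2) * ln (1 + (\<Sum>t=1..T. x t powr (1 - 2*\<alpha>))))"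
proof -
  define y where "y t = x t powr (1 - 2*\<alpha>)" for t
  define S where "S t = (\<Sum>s=1..t. y s)" for t
  define W where "W = (\<Sum>t=1..T. x t * (a t)^2)"
  have S_nonneg: "0 \<le> S t" for t
    unfolding S_def y_def by (intro sum_nonneg) simp
  have x_pos: "0 < x t" if "t \<in> {1..T}" for t
    using assms(1) that by simp
  have W_nonneg: "0 \<le> W"
    unfolding W_def using x_pos by (intro sum_nonneg) (simp add: less_imp_le)
  have summand: "x t powr (1 - \<alpha>) * a t / sqrt (1 + S t) = (sqrt (x t) * a t) * sqrt (y t / (1 + S t))"
    if "t \<in> {1..T}" for t
  proof -
    have "x t powr (1 - \<alpha>) = sqrt (x t) * sqrt (y t)"
      unfolding y_def using x_pos[OF that] by (rule powr_one_minus_eq_sqrt_mult_sqrt)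
    then show ?thesis
      using S_nonneg[of t] by (simp add: real_sqrt_divide)
  qed
  have "(\<Sum>t=1..T. x t powr (1 - \<alpha>) * a t / sqrt (1 + S t))
      = (\<Sum>t=1..T. (sqrt (x t) * a t) * sqrt (y t / (1 + S t)))"
    using summand by (rule sum.cong [OF refl])
  also have "\<dots> \<le> sqrt ((\<Sum>t=1..T. (sqrt (x t) * a t)\<^sup>2) * (\<Sum>t=1..T. (sqrt (y t / (1 + S t)))\<^sup>2))"
    by (rule sum_mult_le_sqrt_sum_squares)
  also have "\<dots> = sqrt (W * (\<Sum>t=1..T. y t / (1 + S t)))"
    unfolding W_def using x_pos S_nonneg
    by (intro arg_cong[where f = sqrt] arg_cong2[where f = "(*)"] sum.cong)
       (simp_all add: power_mult_distrib y_def less_imp_le)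
  also have "\<dots> \<le> sqrt (W * ln (1 + S T))"
    unfolding S_def using W_nonneg
    by (intro real_sqrt_le_mono mult_left_mono sum_div_partial_sums_le_ln) (simp_all add: y_def)
  also have "\<dots> \<le> 2 * sqrt (W * ln (1 + S T))"
    using W_nonneg S_nonneg[of T] by simp
  finally show ?thesis
    by (simp add: W_def S_def y_def)
qed

end
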